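(* Let $n\in\mathbb{N}$ and let $n=2^{\alpha_1}-2^{\alpha_2}+\cdots+(-1)^{\ell-1}2^{\alpha_\ell}$ be an alternating binary representation of $n$. Then $c(n)=\ell$ if $n$ is odd (i.e. $\alpha_\ell=0$), and $c(n)=\ell+1$ if $n$ is even (i.e. $\alpha_\ell\ge1$). Consequently $h(n)=\ell-1$ if $n$ is odd and $h(n)=\ell$ if $n$ is even.
   Context: An alternating binary representation (ABR) of $n\in\mathbb{N}$ is an expression $n=\sum_{i=1}^{\ell}(-1)^{i-1}2^{\alpha_i}$ with $\ell\ge1$ and nonnegative integers $\alpha_1>\alpha_2>\cdots>\alpha_{\ell-1}>\alpha_\ell+1$ (every $n$ has one, obtained from its binary expansion by rewriting maximal blocks of 1s as differences of powers of two, except a final isolated 1). For $i\in\mathbb{N}$, $m\in\mathbb{N}_0$ let $d_i(m)=2^{i-1}-|(m\bmod 2^i)-2^{i-1}|$, and let $c(n)$ be the number of distinct values in $\{d_i(n):i\in\mathbb{N}\}$. For $k\ge0$, $0\le m<2^k$ let $\beta_k(m)\in\{0,1\}^k$ have $j$-th coordinate equal to the binary digit of $m$ of weight $2^{k-j}$. For $n\ge2$, $k=\lceil\log_2 n\rceil$, a pair $(n_0,n_1)$ with $n=n_0+n_1$, $n_0\ge n_1\ge1$ is a hypercubic bipartition (HCBP) of $n$ if for some $i\in\{1,\dots,k\}$ the hyperplane $x_i=1/2$ splits $\beta_k(0),\dots,\beta_k(n-1)$ into $n_0$ points on one side and $n_1$ on the other. For $n\ge 2$, $h(n)$ is the number of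 HCBPs of $n$, and $h(1)=0$. *)

theory Defs
  imports Complex_Main
begin

definition is_ABR :: "nat \<Rightarrow> nat \<Rightarrow> (nat \<Rightarrow> nat) \<Rightarrow> bool" where
  "is_ABR n l a \<longleftrightarrow> l \<ge> 1
     \<and> (\<forall>i. 1 \<le> i \<and> i + 1 < l \<longrightarrow> a (i + 1) < a i)
     \<and> (l \<ge> 2 \<longrightarrow> a l + 1 < a (l - 1))
     \<and> int n = (\<Sum>i = 1..l. (-1) ^ (i - 1) * 2 ^ (a i))"

definition d :: "nat \<Rightarrow> nat \<Rightarrow> int" where
  "d i m = 2 ^ (i - 1) - \<bar>int (m mod 2 ^ i) - 2 ^ (i - 1)\<bar>"

definition c :: "nat \<Rightarrow> nat" where
  "c n = card {d i n | i. i \<ge> 1}"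

text \<open>beta k m as a list of length k; its j-th coordinate (list index j-1) is the binary
  digit of m of weight 2^(k-j).\<close>
definition beta :: "nat \<Rightarrow> nat \<Rightarrow> nat list" where
  "beta k m = map (\<lambda>j. m div 2 ^ (k - j) mod 2) [1..<k + 1]"

definition kdim :: "nat \<Rightarrow> nat" where
  "kdim n = nat \<lceil>log 2 (real n)\<rceil>"

definition is_HCBP :: "nat \<Rightarrow> nat \<times> nat \<Rightarrow> bool" where
  "is_HCBP n p \<longleftrightarrow> (case p of (n0, n1) \<Rightarrow>
     n = n0 + n1 \<and> n0 \<ge> n1 \<and> n1 \<ge> 1 \<and>
     (\<exists>i \<in> {1..kdim n}.
        (let A = card {m. m < n \<and> beta (kdim n) m ! (i - 1) = 0};
             B = card {m. m < n \<and> beta (kdim n) m ! (i - 1) = 1}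
         in (n0 = A \<and> n1 = B) \<or> (n0 = B \<and> n1 = A))))"

definition h :: "nat \<Rightarrow> nat" where
  "h n = (if n \<ge> 2 then card {p. is_HCBP n p} else 0)"

end

theory Submission
  imports Defs "HOL-Library.Log_Nat"
begin

text \<open>The quantity \<open>d\<^sub>i(x)\<close> is the distance from \<open>x\<close> to the nearest multiple of \<open>2\<^sup>i\<close>.
  Hence it is unchanged by \<open>x \<mapsto> 2\<^sup>a - x\<close> when \<open>i \<le> a\<close>, and it equals \<open>x\<close> as soon as
  \<open>x \<le> 2\<^sup>i\<^sup>-\<^sup>1\<close>. Peeling off the leading term of an alternating binary representation writes
  \<open>n = 2\<^sup>\<alpha>\<^sub>1 - w\<close> with \<open>2w < 2\<^sup>\<alpha>\<^sub>1\<close>, and then the values of \<open>d\<^sub>i(n)\<close> are exactly those of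
  \<open>d\<^sub>i(w)\<close> together with the new value \<open>n\<close>. So every term adds one value, starting from
  \<open>{0, 2\<^sup>\<alpha>}\<close> or \<open>{1}\<close> for the last term.

  Cutting \<open>\<beta>(0), \<dots>, \<beta>(n-1)\<close> along the coordinate of weight \<open>2\<^sup>j\<close> gives two sides whose sizes
  differ by \<open>d\<^sub>j\<^sub>+\<^sub>1(n)\<close>, so hypercubic bipartitions correspond to the values of \<open>d\<close> other than
  \<open>n\<close> itself, the value \<open>n\<close> belonging to the cuts with an empty side; thus \<open>h(n) = c(n) - 1\<close>.\<close>

definition d_int :: "nat \<Rightarrow> int \<Rightarrow> int" where
  "d_int i x = 2 ^ (i - 1) - \<bar>x mod 2 ^ i - 2 ^ (i - 1)\<bar>"

definition d_values :: "int \<Rightarrow> int set" where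
  "d_values x = {d_int i x | i. i \<ge> 1}"

lemma d_eq_d_int: "d i m = d_int i (int m)"
  unfolding d_def d_int_def by (simp add: zmod_int)

lemma c_eq_card_d_values: "c n = card (d_values (int n))"
  unfolding c_def d_values_def by (simp add: d_eq_d_int)

lemma d_values_memI: "i \<ge> 1 \<Longrightarrow> d_int i x \<in> d_values x"
  unfolding d_values_def by blast

lemma two_power_eq_double_pred: "i \<ge> 1 \<Longrightarrow> (2::int) ^ i = 2 * 2 ^ (i - 1)"
  by (metis Suc_diff_1 less_le_trans zero_less_one power_Suc)

lemma d_int_nonneg:
  assumes "i \<ge> 1"
  shows "0 \<le> d_int i x"
proof -
  have "0 \<le> x mod 2 ^ i" "x mod 2 ^ i < 2 ^ i"
    by simp_all
  then show ?thesis
    using two_power_eq_double_pred[OF assms] unfolding d_int_def by linarith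
qed

lemma d_int_le: "0 \<le> x \<Longrightarrow> d_int i x \<le> x"
  using zmod_le_nonneg_dividend[of x "2 ^ i"] unfolding d_int_def by linarith

lemma d_int_eq_self:
  assumes "i \<ge> 1" "0 \<le> x" "x \<le> 2 ^ (i - 1)"
  shows "d_int i x = x"
proof -
  have "x < 2 ^ i"
    using assms two_power_eq_double_pred[of i] zero_less_power[of "2::int" "i - 1"] by linarith
  then show ?thesis
    using assms unfolding d_int_def by simp
qed

lemma d_int_eq_self_if_le_two_power:
  assumes "0 \<le> x" "x \<le> 2 ^ k" "k < i"
  shows "d_int i x = x"
proof -
  have "(2::int) ^ k \<le> 2 ^ (i - 1)"
    using assms(3) by (intro power_increasing) auto
  then have "x \<le> 2 ^ (i - 1)"
    using assms(2) by linarith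
  then show ?thesis
    using assms by (intro d_int_eq_self) auto
qed

lemma d_int_reflect:
  assumes "i \<ge> 1" "i \<le> a"
  shows "d_int i (2 ^ a - x) = d_int i x"
proof -
  have "(2::int) ^ i dvd 2 ^ a"
    using assms(2) by (simp add: le_imp_power_dvd)
  then have "(2 ^ a - x) mod 2 ^ i = (- x) mod 2 ^ i"
    by (metis diff_0 mod_0_imp_dvd dvd_imp_mod_0 mod_diff_left_eq)
  also have "\<dots> = (if x mod 2 ^ i = 0 then 0 else 2 ^ i - x mod 2 ^ i)"
    by (simp add: zmod_zminus1_eq_if)
  finally have mod_eq: "(2 ^ a - x) mod 2 ^ i = (if x mod 2 ^ i = 0 then 0 else 2 ^ i - x mod 2 ^ i)" .
  show ?thesis
    unfolding d_int_def mod_eq using two_power_eq_double_pred[OF assms(1)] by auto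
qed

lemma self_mem_d_values:
  assumes "0 \<le> x"
  shows "x \<in> d_values x"
proof -
  have "int (nat x) < 2 ^ nat x"
    by (metis less_exp of_nat_less_iff of_nat_numeral of_nat_power)
  then have "d_int (Suc (nat x)) x = x"
    using assms by (intro d_int_eq_self_if_le_two_power[of x "nat x"]) auto
  then show ?thesis
    using d_values_memI[of "Suc (nat x)" x] by simp
qed

lemma d_values_subset: "0 \<le> x \<Longrightarrow> d_values x \<subseteq> {0..x}"
  unfolding d_values_def using d_int_nonneg d_int_le by auto

lemma finite_d_values: "0 \<le> x \<Longrightarrow> finite (d_values x)"
  using d_values_subset finite_subset by blast

lemma d_values_two_power: "d_values (2 ^ a) = (if a = 0 then {1} else {0, 2 ^ a})"
proof -
  have upper: "d_values (2 ^ a) \<subseteq> {y. y = 2 ^ a \<or> (a \<noteq> 0 \<and> y = 0)}"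
  proof
    fix y assume "y \<in> d_values (2 ^ a)"
    then obtain i where i: "i \<ge> 1" "y = d_int i (2 ^ a)"
      unfolding d_values_def by auto
    show "y \<in> {y. y = 2 ^ a \<or> (a \<noteq> 0 \<and> y = 0)}"
    proof (cases "i \<le> a")
      case True
      then show ?thesis using i d_int_reflect[of i a 0] by (simp add: d_int_def)
    next
      case False
      then show ?thesis using i d_int_eq_self_if_le_two_power[of "2 ^ a" a i] by simp
    qed
  qed
  have "0 \<in> d_values (2 ^ a)" if "a \<noteq> 0"
    using that d_int_reflect[of 1 a 0] d_values_memI[of 1 "2 ^ a"] by (simp add: d_int_def)
  then show ?thesis
    using upper self_mem_d_values[of "2 ^ a"] by auto
qed

text \<open>All values of \<open>d\<^sub>i(w)\<close> with \<open>i \<le> a\<close> are reflected; those with \<open>i > a\<close> are \<open>w\<close>, which is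
  already reached by \<open>i = b + 1 \<le> a\<close>, and \<open>2\<^sup>a - w\<close>, which is new because it exceeds \<open>w\<close>.\<close>
lemma card_d_values_reflect:
  assumes "0 < w" "w \<le> 2 ^ b" "b < a" "2 * w < 2 ^ a"
  shows "card (d_values (2 ^ a - w)) = Suc (card (d_values w))"
proof -
  define v where "v = 2 ^ a - w"
  have v: "0 \<le> v" "v \<le> 2 ^ a" "w < v"
    using assms unfolding v_def by auto
  have reflect: "d_int i v = d_int i w" if "i \<ge> 1" "i \<le> a" for i
    using d_int_reflect[OF that] unfolding v_def .
  have w_mem: "w \<in> d_values v"
    using d_int_eq_self[of "Suc b" w] assms reflect[of "Suc b"] d_values_memI[of "Suc b" v] by simp
  have "d_values v = insert v (d_values w)"
  proof (intro equalityI subsetI)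
    fix y assume "y \<in> d_values v"
    then obtain i where i: "i \<ge> 1" "y = d_int i v"
      unfolding d_values_def by auto
    show "y \<in> insert v (d_values w)"
    proof (cases "i \<le> a")
      case True
      then show ?thesis using i reflect[of i] d_values_memI[of i w] by simp
    next
      case False
      then show ?thesis using i v d_int_eq_self_if_le_two_power[of v a i] by simp
    qed
  next
    fix y assume y: "y \<in> insert v (d_values w)"
    show "y \<in> d_values v"
    proof (cases "y = v")
      case True
      then show ?thesis using self_mem_d_values v by simp
    next
      case False
      then obtain i where i: "i \<ge> 1" "y = d_int i w"
        using y unfolding d_values_def by auto
      show ?thesis
      proof (cases "i \<le> a")
        case True
        then show ?thesis using i reflect[of i] d_values_memI[of i v] by simp
      next
        case False
        then have "y = w"
          using i assms d_int_eq_self_if_le_two_power[of w b i] by simp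
        then show ?thesis using w_mem by simp
      qed
    qed
  qed
  moreover have "v \<notin> d_values w"
    using d_values_subset[of w] assms v by auto
  ultimately show ?thesis
    using finite_d_values[of w] assms unfolding v_def by simp
qed

definition alternating :: "nat \<Rightarrow> (nat \<Rightarrow> nat) \<Rightarrow> bool" where
  "alternating l a \<longleftrightarrow> (\<forall>i. 1 \<le> i \<and> i + 1 < l \<longrightarrow> a (i + 1) < a i)
     \<and> (l \<ge> 2 \<longrightarrow> a l + 1 < a (l - 1))"

definition alt_sum :: "nat \<Rightarrow> (nat \<Rightarrow> nat) \<Rightarrow> int" where
  "alt_sum l a = (\<Sum>i = 1..l. (-1) ^ (i - 1) * 2 ^ (a i))"

lemma is_ABR_iff: "is_ABR n l a \<longleftrightarrow> l \<ge> 1 \<and> alternating l a \<and> int n = alt_sum l a"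
  unfolding is_ABR_def alternating_def alt_sum_def by auto

lemma alt_sum_one: "alt_sum (Suc 0) a = 2 ^ a 1"
  unfolding alt_sum_def by simp

lemma alt_sum_Suc_Suc: "alt_sum (Suc (Suc m)) a = 2 ^ a 1 - alt_sum (Suc m) (\<lambda>i. a (Suc i))"
proof -
  have "alt_sum (Suc (Suc m)) a = 2 ^ a 1 + (\<Sum>i = Suc 1..Suc (Suc m). (-1) ^ (i - 1) * 2 ^ (a i))"
    unfolding alt_sum_def by (subst sum.atLeast_Suc_atMost) simp_all
  also have "(\<Sum>i = Suc 1..Suc (Suc m). (-1) ^ (i - 1) * (2::int) ^ (a i))
      = (\<Sum>i = 1..Suc m. - ((-1) ^ (i - 1) * 2 ^ (a (Suc i))))"
    unfolding sum.shift_bounds_cl_Suc_ivl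
  proof (intro sum.cong refl)
    fix i assume "i \<in> {1..Suc m}"
    then obtain j where "i = Suc j" by (cases i) auto
    then show "(-1) ^ (Suc i - 1) * 2 ^ (a (Suc i)) = - ((-1) ^ (i - 1) * (2::int) ^ (a (Suc i)))"
      by simp
  qed
  finally show ?thesis
    unfolding alt_sum_def by (simp add: sum_negf)
qed

lemma alternating_tail: "alternating (Suc (Suc m)) a \<Longrightarrow> alternating (Suc m) (\<lambda>i. a (Suc i))"
  unfolding alternating_def by (cases m) (auto simp: Suc_le_eq)

lemma alternating_head:
  "alternating (Suc (Suc m)) a \<Longrightarrow> a 2 < a 1 \<and> (m = 0 \<longrightarrow> a 2 + 1 < a 1)"
  unfolding alternating_def by (cases m) (auto simp: numeral_2_eq_2)

lemma alt_sum_bounds: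
  "alternating (Suc m) a \<Longrightarrow>
     0 < alt_sum (Suc m) a \<and> alt_sum (Suc m) a \<le> 2 ^ a 1 \<and> (m \<ge> 1 \<longrightarrow> alt_sum (Suc m) a < 2 ^ a 1)"
proof (induction m arbitrary: a)
  case 0
  then show ?case by (simp add: alt_sum_one)
next
  case (Suc m)
  define w where "w = alt_sum (Suc m) (\<lambda>i. a (Suc i))"
  have w: "0 < w" "w \<le> 2 ^ a 2"
    using Suc.IH[OF alternating_tail[OF Suc.prems]] unfolding w_def by (simp_all add: numeral_2_eq_2)
  have "(2::int) ^ a 2 < 2 ^ a 1"
    using alternating_head[OF Suc.prems] by simp
  then have "w < 2 ^ a 1"
    using w(2) by linarith
  then show ?case
    unfolding alt_sum_Suc_Suc w_def[symmetric] using w(1) by linarith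
qed

lemma double_alt_sum_tail_less:
  assumes "alternating (Suc (Suc m)) a"
  shows "2 * alt_sum (Suc m) (\<lambda>i. a (Suc i)) < 2 ^ a 1"
proof -
  define w where "w = alt_sum (Suc m) (\<lambda>i. a (Suc i))"
  note bounds = alt_sum_bounds[OF alternating_tail[OF assms], folded w_def]
  have head: "a 2 < a 1" "m = 0 \<longrightarrow> a 2 + 1 < a 1"
    using alternating_head[OF assms] by auto
  have "2 * w < 2 ^ a 1"
  proof (cases "m = 0")
    case True
    have "(2::int) ^ (a 2 + 1) < 2 ^ a 1"
      using head True by (intro power_strict_increasing) auto
    then show ?thesis
      using bounds by (simp add: numeral_2_eq_2)
  next
    case False
    have "(2::int) ^ (a 2 + 1) \<le> 2 ^ a 1"
      using head by (intro power_increasing) auto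
    then show ?thesis
      using bounds False by (simp add: numeral_2_eq_2)
  qed
  then show ?thesis
    unfolding w_def .
qed

lemma even_alt_sum_iff:
  "alternating (Suc m) a \<Longrightarrow> even (alt_sum (Suc m) a) \<longleftrightarrow> a (Suc m) \<ge> 1"
proof (induction m arbitrary: a)
  case 0
  then show ?case by (simp add: alt_sum_one Suc_le_eq)
next
  case (Suc m)
  have "a 1 \<noteq> 0"
    using alternating_head[OF Suc.prems] by simp
  then show ?case
    using Suc.IH[OF alternating_tail[OF Suc.prems]] unfolding alt_sum_Suc_Suc by simp
qed

lemma card_d_values_alt_sum:
  "alternating (Suc m) a \<Longrightarrow>
     card (d_values (alt_sum (Suc m) a)) = (if a (Suc m) = 0 then Suc m else Suc (Suc m))"
proof (induction m arbitrary: a)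
  case 0
  then show ?case by (simp add: alt_sum_one d_values_two_power)
next
  case (Suc m)
  define w where "w = alt_sum (Suc m) (\<lambda>i. a (Suc i))"
  have tail: "alternating (Suc m) (\<lambda>i. a (Suc i))"
    using alternating_tail[OF Suc.prems] .
  have w: "0 < w" "w \<le> 2 ^ a 2"
    using alt_sum_bounds[OF tail] unfolding w_def by (simp_all add: numeral_2_eq_2)
  have "card (d_values (2 ^ a 1 - w)) = Suc (card (d_values w))"
    using card_d_values_reflect[OF w] alternating_head[OF Suc.prems]
      double_alt_sum_tail_less[OF Suc.prems, folded w_def] by simp
  then show ?case
    using Suc.IH[OF tail] unfolding alt_sum_Suc_Suc w_def[symmetric] by simp
qed

definition bit_count :: "nat \<Rightarrow> nat \<Rightarrow> nat \<Rightarrow> nat" where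
  "bit_count b n j = card {m. m < n \<and> m div 2 ^ j mod 2 = b}"

lemma bit_count_Suc:
  "bit_count b (Suc n) j = bit_count b n j + (if n div 2 ^ j mod 2 = b then 1 else 0)"
proof -
  have "{m. m < Suc n \<and> m div 2 ^ j mod 2 = b}
      = (if n div 2 ^ j mod 2 = b then insert n else id) {m. m < n \<and> m div 2 ^ j mod 2 = b}"
    by (auto simp: less_Suc_eq)
  then show ?thesis
    unfolding bit_count_def by simp
qed

lemma bit_count_zero_plus_one: "bit_count 0 n j + bit_count 1 n j = n"
proof (induction n)
  case 0
  then show ?case by (simp add: bit_count_def)
next
  case (Suc n)
  then show ?case by (auto simp: bit_count_Suc)
qed

lemma d_Suc: "d (Suc j) (Suc m) = d (Suc j) m + (if m div 2 ^ j mod 2 = 0 then 1 else -1)"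
proof -
  define P :: nat where "P = 2 ^ j"
  define r where "r = m mod (2 * P)"
  have r: "r < 2 * P"
    unfolding r_def P_def by simp
  have bit: "m div 2 ^ j mod 2 = 0 \<longleftrightarrow> r < P"
  proof -
    have "m div 2 ^ j mod 2 = r div P"
      unfolding r_def P_def by (metis add_0_right add_Suc_right div_exp_mod_exp_eq power_Suc power_Suc0_right)
    then show ?thesis
      by (simp add: div_eq_0_iff P_def)
  qed
  have d_m: "d (Suc j) m = int P - \<bar>int r - int P\<bar>"
    unfolding d_def r_def P_def by simp
  have d_Suc_m: "d (Suc j) (Suc m) = int P - \<bar>int (if Suc r = 2 * P then 0 else Suc r) - int P\<bar>"
    unfolding d_def r_def P_def by (simp add: mod_Suc)
  show ?thesis
    unfolding d_m d_Suc_m bit using r by (auto simp: abs_if)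
qed

lemma bit_count_zero_minus_one: "int (bit_count 0 n j) - int (bit_count 1 n j) = d (Suc j) n"
proof (induction n)
  case 0
  then show ?case by (simp add: bit_count_def d_def)
next
  case (Suc n)
  then show ?case by (auto simp: bit_count_Suc d_Suc)
qed

lemma bit_count_one_le_zero: "bit_count 1 n j \<le> bit_count 0 n j"
  using bit_count_zero_minus_one[of n j] d_int_nonneg[of "Suc j" "int n"] by (simp add: d_eq_d_int)

lemma beta_nth: "i < k \<Longrightarrow> beta k m ! i = m div 2 ^ (k - Suc i) mod 2"
  unfolding beta_def by (simp del: upt_Suc)

lemma card_beta_coordinate:
  "i < k \<Longrightarrow> card {m. m < n \<and> beta k m ! i = b} = bit_count b n (k - Suc i)"
  unfolding bit_count_def by (simp add: beta_nth)

lemma ex_reverse_index: "(\<exists>i \<in> {1..k}. P (k - i)) \<longleftrightarrow> (\<exists>j < k. P j)" for k :: nat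
proof
  assume "\<exists>i \<in> {1..k}. P (k - i)"
  then obtain i where "i \<in> {1..k}" "P (k - i)" by blast
  moreover from this have "k - i < k" by auto
  ultimately show "\<exists>j < k. P j" by blast
next
  assume "\<exists>j < k. P j"
  then obtain j where "j < k" "P j" by blast
  then show "\<exists>i \<in> {1..k}. P (k - i)" by (intro bexI[of _ "k - j"]) auto
qed

lemma is_HCBP_iff:
  "is_HCBP n p \<longleftrightarrow>
     (\<exists>j < kdim n. p = (bit_count 0 n j, bit_count 1 n j) \<and> bit_count 1 n j \<ge> 1)"
proof -
  define k where "k = kdim n"
  obtain n0 n1 where p: "p = (n0, n1)"
    by fastforce
  define sizes where "sizes j \<longleftrightarrow> n0 = bit_count 0 n j \<and> n1 = bit_count 1 n j
      \<or> n0 = bit_count 1 n j \<and> n1 = bit_count 0 n j" for j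
  have coordinate: "(let A = card {m. m < n \<and> beta k m ! (i - 1) = 0};
          B = card {m. m < n \<and> beta k m ! (i - 1) = 1}
        in (n0 = A \<and> n1 = B) \<or> (n0 = B \<and> n1 = A)) \<longleftrightarrow> sizes (k - i)"
    if "i \<in> {1..k}" for i
  proof -
    have "i - 1 < k" "k - Suc (i - 1) = k - i"
      using that by auto
    then show ?thesis
      using card_beta_coordinate[of "i - 1" k n] unfolding sizes_def Let_def by simp
  qed
  have "is_HCBP n p \<longleftrightarrow> n = n0 + n1 \<and> n1 \<le> n0 \<and> 1 \<le> n1 \<and> (\<exists>i \<in> {1..k}. sizes (k - i))"
    unfolding is_HCBP_def p k_def[symmetric] prod.case using coordinate by blast
  also have "\<dots> \<longleftrightarrow> n = n0 + n1 \<and> n1 \<le> n0 \<and> 1 \<le> n1 \<and> (\<exists>j < k. sizes j)"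
    by (simp only: ex_reverse_index)
  also have "\<dots> \<longleftrightarrow> (\<exists>j < k. p = (bit_count 0 n j, bit_count 1 n j) \<and> bit_count 1 n j \<ge> 1)"
  proof -
    have ordered: "sizes j \<and> n1 \<le> n0 \<longleftrightarrow> n0 = bit_count 0 n j \<and> n1 = bit_count 1 n j" for j
      using bit_count_one_le_zero[of n j] unfolding sizes_def by auto
    show ?thesis
      unfolding p using ordered bit_count_zero_plus_one[of n] by (metis Pair_inject)
  qed
  finally show ?thesis
    unfolding k_def .
qed

lemma le_two_power_kdim: "n \<ge> 1 \<Longrightarrow> n \<le> 2 ^ kdim n"
  using le_two_power_ceillog2[of n] unfolding kdim_def ceillog2_def by simp

lemma d_values_minus_self:
  assumes "0 \<le> x" "x \<le> 2 ^ k"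
  shows "d_values x - {x} = (\<lambda>j. d_int (Suc j) x) ` {j. j < k \<and> d_int (Suc j) x \<noteq> x}"
proof (intro equalityI subsetI)
  fix y assume "y \<in> d_values x - {x}"
  then obtain i where i: "i \<ge> 1" "y = d_int i x" "y \<noteq> x"
    unfolding d_values_def by auto
  have "i \<le> k"
    using i d_int_eq_self_if_le_two_power[OF assms, of i] by (meson not_le)
  then show "y \<in> (\<lambda>j. d_int (Suc j) x) ` {j. j < k \<and> d_int (Suc j) x \<noteq> x}"
    using i by (intro image_eqI[of _ _ "i - 1"]) auto
qed (auto intro: d_values_memI)

lemma h_eq_c_minus_one:
  assumes "n \<ge> 1"
  shows "h n = c n - 1"
proof (cases "n = 1")
  case True
  then show ?thesis
    using d_values_two_power[of 0] unfolding h_def c_eq_card_d_values by simp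
next
  case False
  define J where "J = {j. j < kdim n \<and> bit_count 1 n j \<ge> 1}"
  define diff :: "nat \<times> nat \<Rightarrow> int" where "diff p = int (fst p) - int (snd p)" for p
  have HCBPs: "{p. is_HCBP n p} = (\<lambda>j. (bit_count 0 n j, bit_count 1 n j)) ` J"
    unfolding J_def is_HCBP_iff by auto
  have "inj_on diff {p. fst p + snd p = n}"
    by (rule inj_onI) (auto simp: diff_def prod_eq_iff)
  moreover have "{p. is_HCBP n p} \<subseteq> {p. fst p + snd p = n}"
    unfolding HCBPs using bit_count_zero_plus_one[of n] by auto
  ultimately have "inj_on diff {p. is_HCBP n p}"
    by (rule inj_on_subset)
  moreover have "diff ` {p. is_HCBP n p} = d_values (int n) - {int n}"
  proof -
    have "bit_count 1 n j \<ge> 1 \<longleftrightarrow> d_int (Suc j) (int n) \<noteq> int n" for j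
      using bit_count_zero_plus_one[of n j] bit_count_zero_minus_one[of n j]
      by (auto simp: d_eq_d_int)
    then have "J = {j. j < kdim n \<and> d_int (Suc j) (int n) \<noteq> int n}"
      unfolding J_def by blast
    moreover have "int n \<le> 2 ^ kdim n"
      using le_two_power_kdim[OF assms] by (metis of_nat_le_iff of_nat_numeral of_nat_power)
    ultimately show ?thesis
      unfolding HCBPs image_image diff_def using bit_count_zero_minus_one[of n]
      by (simp add: d_values_minus_self d_eq_d_int)
  qed
  ultimately have "card {p. is_HCBP n p} = card (d_values (int n) - {int n})"
    by (metis card_image)
  then show ?thesis
    using False assms finite_d_values[of "int n"] self_mem_d_values[of "int n"]
    unfolding h_def c_eq_card_d_values by simp
qed

theorem theorem20:
  fixes n l :: nat and a :: "nat \<Rightarrow> nat"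
  assumes "n \<ge> 1" and "is_ABR n l a"
  shows "(odd n \<longrightarrow> c n = l \<and> h n = l - 1) \<and> (even n \<longrightarrow> c n = l + 1 \<and> h n = l)"
proof -
  obtain m where l: "l = Suc m" and alt: "alternating (Suc m) a" and n: "int n = alt_sum (Suc m) a"
    using assms(2) unfolding is_ABR_iff by (cases l) auto
  have parity: "even n \<longleftrightarrow> a l \<ge> 1"
    using even_alt_sum_iff[OF alt] n l by (metis even_of_nat)
  have "c n = (if a l = 0 then l else Suc l)"
    using card_d_values_alt_sum[OF alt] n l unfolding c_eq_card_d_values by simp
  then show ?thesis
    using parity h_eq_c_minus_one[OF assms(1)] by auto
qed

end
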